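(* Let $a>0$, $t_f>0$, $0<\lambda<1$, and real $u_L \neq u_R$. For $h>0$ let $\nu_h = \frac{a h (1-\lambda)}{2}$ and $$u_h(x) = \frac{u_L+u_R}{2} + \frac{u_R-u_L}{2}\operatorname{erf}\!\left(\frac{x-a t_f}{\sqrt{4\nu_h t_f}}\right), \qquad x\in\mathbb{R},$$ where $\operatorname{erf}(\zeta) = \frac{2}{\sqrt{\pi}}\int_0^\zeta e^{-s^2}\,ds$. Then there is a constant $C>0$ depending only on $a,t_f,\lambda,u_L,u_R$ (not on $h$) such that for all $h,h'>0$, $$\|u_h - u_{h'}\|_{L_1(\mathbb{R})} = C\,\left|\sqrt{h}-\sqrt{h'}\right|.$$ Consequently, for any pairwise distinct $h_1,h_2,h_3>0$ and any ordering $(i,j,k)$ of $\{1,2,3\}$, $\sigma = 1/2$ solves $$\frac{\|u_{h_i}-u_{h_j}\|_{L_1}}{\|u_{h_j}-u_{h_k}\|_{L_1}} = \frac{|h_i^\sigma - h_j^\sigma|}{|h_j^\sigma - h_k^\sigma|};$$ i.e. all three variants $\mathcal{R}(u_{h_1},u_{h_2},u_{h_3})$, $\mathcal{R}(u_{h_1},u_{h_3},u_{h_2})$, $\mathcal{R}(u_{h_2},u_{h_1},u_{h_3})$ of the Richardson convergence-rate estimate yield the rate $1/2$.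
   Context: Setting: $u_h$ is the solution at time $t_f$ of the truncated modified equation $U_t + aU_x - \nu_h U_{xx} = 0$ of the first-order upwind scheme $u_i^{n+1} = u_i^n - \lambda(u_i^n - u_{i-1}^n)$ (CFL number $\lambda = a\Delta t/h$, same $\lambda$ at all resolutions) for linear advection $u_t + a u_x=0$ with jump initial data $u=u_L$ for $x<0$, $u=u_R$ for $x\ge0$; it is taken as the model of the numerical solution at grid spacing $h$. Richardson convergence-rate estimate: $\mathcal{R}(v_1,v_2,v_3)$, for approximations $v_m$ at spacings $g_m$, denotes the solution $\sigma$ of $\frac{\|v_1-v_2\|}{\|v_2-v_3\|} = \frac{|g_1^\sigma-g_2^\sigma|}{|g_2^\sigma-g_3^\sigma|}$ with $\|\cdot\|$ the $L_1$ norm. *)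

theory Defs
  imports "HOL-Analysis.Analysis"
begin

definition erf :: "real \<Rightarrow> real" where
  "erf z = 2 / sqrt pi *
     (if 0 \<le> z then integral {0..z} (\<lambda>s. exp (- s\<^sup>2))
      else - integral {z..0} (\<lambda>s. exp (- s\<^sup>2)))"

text \<open>Numerical viscosity of the upwind scheme's modified equation.\<close>
definition nu_h :: "real \<Rightarrow> real \<Rightarrow> real \<Rightarrow> real" where
  "nu_h a lam h = a * h * (1 - lam) / 2"

definition u_h :: "real \<Rightarrow> real \<Rightarrow> real \<Rightarrow> real \<Rightarrow> real \<Rightarrow> real \<Rightarrow> real \<Rightarrow> real" where
  "u_h a tf lam uL uR h x =
     (uL + uR) / 2 + (uR - uL) / 2 * erf ((x - a * tf) / sqrt (4 * nu_h a lam h * tf))"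

definition L1_dist :: "(real \<Rightarrow> real) \<Rightarrow> (real \<Rightarrow> real) \<Rightarrow> real" where
  "L1_dist f g = (LINT x|lborel. \<bar>f x - g x\<bar>)"

end

theory Submission imports Defs "HOL-Real_Asymp.Real_Asymp" begin

text \<open>The difference of two error-function profiles with the same centre \<open>c\<close> and widths
\<open>\<alpha> < \<beta>\<close>, \<open>g x = erf ((x - c) / \<alpha>) - erf ((x - c) / \<beta>)\<close>, changes sign exactly at \<open>c\<close> and has the
explicit primitive \<open>(x - c) g x + (\<alpha> e^{-((x-c)/\<alpha>)^2} - \<beta> e^{-((x-c)/\<beta>)^2}) / \<surd>\<pi>\<close>, which
vanishes at \<open>\<plusminus>\<infinity>\<close>. Hence \<open>\<integral>|g| = 2 (\<beta> - \<alpha>) / \<surd>\<pi>\<close>, linear in the widths. The width of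
\<open>u_h\<close> is proportional to \<open>\<surd>h\<close>, so \<open>\<parallel>u_h - u_h'\<parallel>\<^sub>1 = C |\<surd>h - \<surd>h'|\<close>, and the constant \<open>C\<close>
cancels in every Richardson ratio, leaving the rate \<open>1/2\<close>.\<close>

lemma erf_has_real_derivative: "(erf has_real_derivative (2 / sqrt pi * exp (- z\<^sup>2))) (at z)"
proof -
  define f where "f = (\<lambda>s::real. exp (- s\<^sup>2))"
  define a0 where "a0 = min 0 z - 1"
  define b0 where "b0 = max 0 z + 1"
  define J where "J = (\<lambda>x. integral {a0..x} f)"
  have cont: "continuous_on {a0..b0} f" unfolding f_def by (intro continuous_intros)
  have intg: "\<And>c d. f integrable_on {c..d}" unfolding f_def
    by (intro integrable_continuous_real continuous_intros)
  have "(J has_real_derivative f z) (at z within {a0..b0})"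
    unfolding J_def by (rule integral_has_real_derivative[OF cont]) (auto simp: a0_def b0_def)
  moreover have "at z within {a0..b0} = at z"
    by (rule at_within_Icc_at) (auto simp: a0_def b0_def)
  ultimately have dJ: "(J has_real_derivative f z) (at z)" by simp
  have dJ': "((\<lambda>x. 2 / sqrt pi * (J x - J 0)) has_real_derivative 2 / sqrt pi * exp (- z\<^sup>2)) (at z)"
    using DERIV_cmult[OF DERIV_diff[OF dJ DERIV_const[of "J 0"]], of "2 / sqrt pi"] by (simp add: f_def)
  show ?thesis
  proof (rule has_field_derivative_transform_within_open[OF dJ', of "{a0<..}"])
    show "open {a0<..}" "z \<in> {a0<..}" by (auto simp: a0_def)
    fix x assume x: "x \<in> {a0<..}"
    show "2 / sqrt pi * (J x - J 0) = erf x"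
    proof (cases "0 \<le> x")
      case True
      have "integral {a0..0} f + integral {0..x} f = integral {a0..x} f"
        using Henstock_Kurzweil_Integration.integral_combine[where a=a0 and c=0 and b=x and f=f] intg True by (auto simp: a0_def)
      then show ?thesis using True by (simp add: erf_def J_def f_def)
    next
      case False
      have "integral {a0..x} f + integral {x..0} f = integral {a0..0} f"
        using Henstock_Kurzweil_Integration.integral_combine[where a=a0 and c=x and b=0 and f=f] intg False x by (auto simp: a0_def)
      then show ?thesis
        using False by (simp add: erf_def J_def f_def algebra_simps flip: add_divide_distrib distrib_left)
    qed
  qed
qed

lemma erf_has_real_derivative_chain [derivative_intros]:
  "(f has_real_derivative f') (at x within S) \<Longrightarrow>
   ((\<lambda>x. erf (f x)) has_real_derivative (2 / sqrt pi * exp (- (f x)\<^sup>2) * f')) (at x within S)"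
  using DERIV_chain2[OF erf_has_real_derivative] by blast

lemma isCont_erf: "isCont erf z"
  using DERIV_isCont[OF erf_has_real_derivative] .

lemma erf_mean_value:
  assumes "p < q"
  obtains \<xi> where "p < \<xi>" "\<xi> < q" "erf q - erf p = (q - p) * (2 / sqrt pi * exp (- \<xi>\<^sup>2))"
  using MVT2[OF assms erf_has_real_derivative] by blast

lemma erf_mono:
  assumes "u \<le> v"
  shows "erf u \<le> erf v"
proof (cases "u = v")
  case False
  with assms have "u < v" by simp
  then obtain \<xi> where "erf v - erf u = (v - u) * (2 / sqrt pi * exp (- \<xi>\<^sup>2))"
    by (rule erf_mean_value)
  moreover have "0 \<le> (v - u) * (2 / sqrt pi * exp (- \<xi>\<^sup>2))" using \<open>u < v\<close> by simp
  ultimately show ?thesis by linarith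
qed simp

text \<open>By the mean value theorem, with the Gaussian evaluated at the endpoint closer to \<open>0\<close>.\<close>
lemma erf_diff_abs_le:
  assumes "u * v \<ge> 0" "\<bar>v\<bar> \<le> \<bar>u\<bar>"
  shows "\<bar>erf u - erf v\<bar> \<le> 2 / sqrt pi * \<bar>u - v\<bar> * exp (- v\<^sup>2)"
proof -
  have mvt_bound: "\<bar>erf q - erf p\<bar> \<le> 2 / sqrt pi * (q - p) * exp (- w\<^sup>2)"
    if "p < q" and w_le: "\<And>\<xi>. p < \<xi> \<Longrightarrow> \<xi> < q \<Longrightarrow> w\<^sup>2 \<le> \<xi>\<^sup>2" for p q w :: real
  proof -
    obtain \<xi> where \<xi>: "p < \<xi>" "\<xi> < q" "erf q - erf p = (q - p) * (2 / sqrt pi * exp (- \<xi>\<^sup>2))"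
      using erf_mean_value[OF \<open>p < q\<close>] by blast
    have "exp (- \<xi>\<^sup>2) \<le> exp (- w\<^sup>2)" using w_le[OF \<xi>(1,2)] by simp
    then have "(q - p) * (2 / sqrt pi * exp (- \<xi>\<^sup>2)) \<le> (q - p) * (2 / sqrt pi * exp (- w\<^sup>2))"
      using \<xi> by (intro mult_left_mono) (auto simp: divide_right_mono)
    moreover have "0 \<le> (q - p) * (2 / sqrt pi * exp (- \<xi>\<^sup>2))" using \<xi> by simp
    ultimately have "\<bar>erf q - erf p\<bar> \<le> (q - p) * (2 / sqrt pi * exp (- w\<^sup>2))"
      using \<xi>(3) by linarith
    then show ?thesis by (simp add: algebra_simps)
  qed
  consider "u < v" | "u = v" | "v < u" by linarith
  then show ?thesis
  proof cases
    case 1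
    then have "v \<le> 0" using assms by (auto simp: zero_le_mult_iff)
    then have "\<And>\<xi>. u < \<xi> \<Longrightarrow> \<xi> < v \<Longrightarrow> v\<^sup>2 \<le> \<xi>\<^sup>2"
      by (subst abs_le_square_iff[symmetric]) auto
    then show ?thesis using mvt_bound[OF 1, of v] 1 by (simp add: abs_minus_commute)
  next
    case 3
    then have "v \<ge> 0" using assms by (auto simp: zero_le_mult_iff)
    then have "\<And>\<xi>. v < \<xi> \<Longrightarrow> \<xi> < u \<Longrightarrow> v\<^sup>2 \<le> \<xi>\<^sup>2" by (simp add: power_mono)
    then show ?thesis using mvt_bound[OF 3, of v] 3 by simp
  qed simp
qed

lemma integral_abs_sign_change_primitive:
  fixes g P :: "real \<Rightarrow> real" and c :: real
  assumes P': "\<And>x. (P has_real_derivative g x) (at x)"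
    and g_cont: "\<And>x. isCont g x"
    and g_nonpos: "\<And>x. x \<le> c \<Longrightarrow> g x \<le> 0"
    and g_nonneg: "\<And>x. c \<le> x \<Longrightarrow> 0 \<le> g x"
    and P_bot: "(P \<longlongrightarrow> 0) at_bot" and P_top: "(P \<longlongrightarrow> 0) at_top"
  shows "integrable lborel (\<lambda>x. \<bar>g x\<bar>)" and "(LINT x|lborel. \<bar>g x\<bar>) = - 2 * P c"
proof -
  have P_at_c: "(P \<longlongrightarrow> P c) (at c within S)" for S
    using DERIV_isCont[OF P'] by (simp add: isCont_def tendsto_mono[OF at_within_le_at])
  have right: "set_integrable lborel (einterval (ereal c) \<infinity>) g \<and>
      (LBINT x=ereal c..\<infinity>. g x) = 0 - P c"
    using interval_integral_FTC_nonneg[where F = P and f = g and a = c and b = \<infinity> and A = "P c" and B = 0]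
      P' g_cont g_nonneg P_at_c P_top
    by (auto intro!: AE_I2 simp: ereal_tendsto_simps1)
  have left: "set_integrable lborel (einterval (-\<infinity>) (ereal c)) (\<lambda>x. - g x) \<and>
      (LBINT x=-\<infinity>..ereal c. - g x) = - P c - - 0"
    using interval_integral_FTC_nonneg[where F = "\<lambda>x. - P x" and f = "\<lambda>x. - g x" and a = "-\<infinity>"
        and b = c and A = "- 0" and B = "- P c"]
      DERIV_minus[OF P'] g_cont g_nonpos tendsto_minus[OF P_at_c] tendsto_minus[OF P_bot]
    by (auto intro!: AE_I2 continuous_intros simp: ereal_tendsto_simps1)
  have integrable_right: "integrable lborel (\<lambda>x. indicator {c<..} x * g x)"
    and integrable_left: "integrable lborel (\<lambda>x. indicator {..<c} x * - g x)"
    using right left by (simp_all add: set_integrable_def)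
  have abs_split: "\<bar>g x\<bar> = indicator {..<c} x * - g x + indicator {c<..} x * g x" for x
    using g_nonpos[of x] g_nonneg[of x] g_nonpos[of c] g_nonneg[of c]
    by (cases x c rule: linorder_cases) (auto simp: indicator_def)
  show "integrable lborel (\<lambda>x. \<bar>g x\<bar>)"
    unfolding abs_split using integrable_left integrable_right by simp
  have "(LINT x|lborel. \<bar>g x\<bar>) = (LBINT x=-\<infinity>..ereal c. - g x) + (LBINT x=ereal c..\<infinity>. g x)"
    unfolding abs_split Bochner_Integration.integral_add[OF integrable_left integrable_right]
    by (simp add: interval_lebesgue_integral_def set_lebesgue_integral_def)
  then show "(LINT x|lborel. \<bar>g x\<bar>) = - 2 * P c"
    using left right by simp
qed

definition erf_gap :: "real \<Rightarrow> real \<Rightarrow> real \<Rightarrow> real \<Rightarrow> real" where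
  "erf_gap \<alpha> \<beta> c x = erf ((x - c) / \<alpha>) - erf ((x - c) / \<beta>)"

definition erf_gap_primitive :: "real \<Rightarrow> real \<Rightarrow> real \<Rightarrow> real \<Rightarrow> real" where
  "erf_gap_primitive \<alpha> \<beta> c x = (x - c) * erf_gap \<alpha> \<beta> c x
     + (\<alpha> * exp (- ((x - c) / \<alpha>)\<^sup>2) - \<beta> * exp (- ((x - c) / \<beta>)\<^sup>2)) / sqrt pi"

lemma isCont_erf_gap: "isCont (erf_gap \<alpha> \<beta> c) x"
  unfolding erf_gap_def divide_inverse by (intro continuous_intros isCont_o2[OF _ isCont_erf])

lemma erf_gap_nonneg: "0 < \<alpha> \<Longrightarrow> \<alpha> \<le> \<beta> \<Longrightarrow> c \<le> x \<Longrightarrow> 0 \<le> erf_gap \<alpha> \<beta> c x"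
  unfolding erf_gap_def by (simp add: erf_mono divide_left_mono)

lemma erf_gap_nonpos: "0 < \<alpha> \<Longrightarrow> \<alpha> \<le> \<beta> \<Longrightarrow> x \<le> c \<Longrightarrow> erf_gap \<alpha> \<beta> c x \<le> 0"
  unfolding erf_gap_def by (simp add: erf_mono divide_left_mono_neg)

lemma erf_gap_primitive_at_centre: "erf_gap_primitive \<alpha> \<beta> c c = (\<alpha> - \<beta>) / sqrt pi"
  by (simp add: erf_gap_primitive_def erf_gap_def diff_divide_distrib)

lemma erf_gap_primitive_has_real_derivative:
  assumes "\<alpha> \<noteq> 0" "\<beta> \<noteq> 0"
  shows "(erf_gap_primitive \<alpha> \<beta> c has_real_derivative erf_gap \<alpha> \<beta> c x) (at x)"
proof -
  have sqrt_pi: "y * sqrt pi / pi = y / sqrt pi" for y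
  proof -
    have "sqrt pi * sqrt pi = pi" by simp
    then show ?thesis by (simp add: field_simps)
  qed
  show ?thesis
    unfolding erf_gap_primitive_def erf_gap_def using assms
    by (auto intro!: derivative_eq_intros) (simp only: sqrt_pi, simp add: field_simps)
qed

lemma abs_erf_gap_le:
  assumes "0 < \<alpha>" "\<alpha> \<le> \<beta>"
  shows "\<bar>erf_gap \<alpha> \<beta> c x\<bar> \<le> 2 / sqrt pi * \<bar>x - c\<bar> * (1/\<alpha> - 1/\<beta>) * exp (- ((x - c) / \<beta>)\<^sup>2)"
proof -
  have "\<bar>erf_gap \<alpha> \<beta> c x\<bar> \<le> 2 / sqrt pi * \<bar>(x - c) / \<alpha> - (x - c) / \<beta>\<bar> * exp (- ((x - c) / \<beta>)\<^sup>2)"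
    unfolding erf_gap_def
  proof (rule erf_diff_abs_le)
    have "(x - c) / \<alpha> * ((x - c) / \<beta>) = (x - c)\<^sup>2 / (\<alpha> * \<beta>)"
      by (simp add: power2_eq_square)
    then show "0 \<le> (x - c) / \<alpha> * ((x - c) / \<beta>)" using assms by simp
    show "\<bar>(x - c) / \<beta>\<bar> \<le> \<bar>(x - c) / \<alpha>\<bar>"
      using assms by (simp add: abs_divide divide_left_mono)
  qed
  also have "\<bar>(x - c) / \<alpha> - (x - c) / \<beta>\<bar> = \<bar>x - c\<bar> * (1/\<alpha> - 1/\<beta>)"
  proof -
    have "(x - c) / \<alpha> - (x - c) / \<beta> = (x - c) * (1/\<alpha> - 1/\<beta>)" by (simp add: algebra_simps)
    moreover have "1/\<beta> \<le> 1/\<alpha>" using assms by (simp add: frac_le)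
    ultimately show ?thesis by (simp add: abs_mult)
  qed
  finally show ?thesis by (simp only: mult.assoc)
qed

lemma erf_gap_primitive_tendsto:
  assumes "0 < \<alpha>" "\<alpha> \<le> \<beta>"
  shows "(erf_gap_primitive \<alpha> \<beta> c \<longlongrightarrow> 0) at_top"
    and "(erf_gap_primitive \<alpha> \<beta> c \<longlongrightarrow> 0) at_bot"
proof -
  define B where "B x = 2 / sqrt pi * (x - c)\<^sup>2 * (1/\<alpha> - 1/\<beta>) * exp (- ((x - c) / \<beta>)\<^sup>2)" for x
  have B_bound: "norm ((x - c) * erf_gap \<alpha> \<beta> c x) \<le> B x" for x
  proof -
    have "\<bar>x - c\<bar> * \<bar>erf_gap \<alpha> \<beta> c x\<bar>
        \<le> \<bar>x - c\<bar> * (2 / sqrt pi * \<bar>x - c\<bar> * (1/\<alpha> - 1/\<beta>) * exp (- ((x - c) / \<beta>)\<^sup>2))"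
      using abs_erf_gap_le[OF assms] by (rule mult_left_mono) simp
    also have "\<dots> = 2 / sqrt pi * (\<bar>x - c\<bar> * \<bar>x - c\<bar>) * (1/\<alpha> - 1/\<beta>) * exp (- ((x - c) / \<beta>)\<^sup>2)"
      by (simp only: mult_ac)
    also have "\<bar>x - c\<bar> * \<bar>x - c\<bar> = (x - c)\<^sup>2" by (simp add: power2_eq_square abs_mult_self_eq)
    finally show ?thesis by (simp add: B_def abs_mult)
  qed
  have "0 < \<beta>" using assms by simp
  have B_lim: "(B \<longlongrightarrow> 0) at_top" "(B \<longlongrightarrow> 0) at_bot"
    unfolding B_def using assms \<open>0 < \<beta>\<close> by real_asymp+
  have gauss: "((\<lambda>x. exp (- ((x - c) / \<gamma>)\<^sup>2)) \<longlongrightarrow> 0) at_top"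
    "((\<lambda>x. exp (- ((x - c) / \<gamma>)\<^sup>2)) \<longlongrightarrow> 0) at_bot" if "0 < \<gamma>" for \<gamma> :: real
    using that by real_asymp+
  have exp_lim: "((\<lambda>x. (\<alpha> * exp (- ((x - c) / \<alpha>)\<^sup>2) - \<beta> * exp (- ((x - c) / \<beta>)\<^sup>2)) / sqrt pi) \<longlongrightarrow> 0) F"
    if "((\<lambda>x. exp (- ((x - c) / \<alpha>)\<^sup>2)) \<longlongrightarrow> 0) F" "((\<lambda>x. exp (- ((x - c) / \<beta>)\<^sup>2)) \<longlongrightarrow> 0) F"
    for F
    using tendsto_divide[OF tendsto_diff[OF tendsto_mult_right_zero[OF that(1)] tendsto_mult_right_zero[OF that(2)]]
        tendsto_const, of "sqrt pi"]
    by simp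
  have "((\<lambda>x. (x - c) * erf_gap \<alpha> \<beta> c x) \<longlongrightarrow> 0) at_top"
    by (rule Lim_null_comparison[OF always_eventually B_lim(1)]) (use B_bound in auto)
  then show "(erf_gap_primitive \<alpha> \<beta> c \<longlongrightarrow> 0) at_top"
    unfolding erf_gap_primitive_def[abs_def]
    using exp_lim[OF gauss(1)[OF \<open>0 < \<alpha>\<close>] gauss(1)[OF \<open>0 < \<beta>\<close>]] by (rule tendsto_add_zero)
  have "((\<lambda>x. (x - c) * erf_gap \<alpha> \<beta> c x) \<longlongrightarrow> 0) at_bot"
    by (rule Lim_null_comparison[OF always_eventually B_lim(2)]) (use B_bound in auto)
  then show "(erf_gap_primitive \<alpha> \<beta> c \<longlongrightarrow> 0) at_bot"
    unfolding erf_gap_primitive_def[abs_def]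
    using exp_lim[OF gauss(2)[OF \<open>0 < \<alpha>\<close>] gauss(2)[OF \<open>0 < \<beta>\<close>]] by (rule tendsto_add_zero)
qed

lemma erf_gap_L1_ordered:
  assumes "0 < \<alpha>" "\<alpha> \<le> \<beta>"
  shows "integrable lborel (\<lambda>x. \<bar>erf_gap \<alpha> \<beta> c x\<bar>)"
    and "(LINT x|lborel. \<bar>erf_gap \<alpha> \<beta> c x\<bar>) = 2 * (\<beta> - \<alpha>) / sqrt pi"
proof -
  note primitive = integral_abs_sign_change_primitive[where P = "erf_gap_primitive \<alpha> \<beta> c" and c = c,
      OF erf_gap_primitive_has_real_derivative isCont_erf_gap
      erf_gap_nonpos[OF assms] erf_gap_nonneg[OF assms] erf_gap_primitive_tendsto(2,1)[OF assms]]
  show "integrable lborel (\<lambda>x. \<bar>erf_gap \<alpha> \<beta> c x\<bar>)"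
    using primitive(1) assms by simp
  show "(LINT x|lborel. \<bar>erf_gap \<alpha> \<beta> c x\<bar>) = 2 * (\<beta> - \<alpha>) / sqrt pi"
    using primitive(2) assms by (simp add: erf_gap_primitive_at_centre)
qed

lemma erf_gap_L1:
  assumes "0 < \<alpha>" "0 < \<beta>"
  shows "integrable lborel (\<lambda>x. \<bar>erf_gap \<alpha> \<beta> c x\<bar>)"
    and "(LINT x|lborel. \<bar>erf_gap \<alpha> \<beta> c x\<bar>) = 2 * \<bar>\<beta> - \<alpha>\<bar> / sqrt pi"
proof -
  have swap: "\<bar>erf_gap \<beta> \<alpha> c x\<bar> = \<bar>erf_gap \<alpha> \<beta> c x\<bar>" for x
    by (simp add: erf_gap_def abs_minus_commute)
  have "\<alpha> \<le> \<beta> \<or> \<beta> \<le> \<alpha>" by linarith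
  then show "integrable lborel (\<lambda>x. \<bar>erf_gap \<alpha> \<beta> c x\<bar>)"
    and "(LINT x|lborel. \<bar>erf_gap \<alpha> \<beta> c x\<bar>) = 2 * \<bar>\<beta> - \<alpha>\<bar> / sqrt pi"
    using erf_gap_L1_ordered[OF \<open>0 < \<alpha>\<close>, of \<beta> c] erf_gap_L1_ordered[OF \<open>0 < \<beta>\<close>, of \<alpha> c]
    by (auto simp: swap)
qed

lemma u_h_diff:
  "u_h a tf lam uL uR h x - u_h a tf lam uL uR h' x =
   (uR - uL) / 2 * erf_gap (sqrt (4 * nu_h a lam h * tf)) (sqrt (4 * nu_h a lam h' * tf)) (a * tf) x"
  by (simp add: u_h_def erf_gap_def algebra_simps)

lemma sqrt_4_nu_h_mult: "sqrt (4 * nu_h a lam h * tf) = sqrt (2 * a * (1 - lam) * tf) * sqrt h"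
  by (simp add: nu_h_def mult_ac flip: real_sqrt_mult)

lemma L1_dist_u_h:
  assumes "0 < a" "0 < tf" "lam < 1" "0 < h" "0 < h'"
  shows "integrable lborel (\<lambda>x. \<bar>u_h a tf lam uL uR h x - u_h a tf lam uL uR h' x\<bar>)"
    and "L1_dist (u_h a tf lam uL uR h) (u_h a tf lam uL uR h')
         = \<bar>uR - uL\<bar> * sqrt (2 * a * (1 - lam) * tf) / sqrt pi * \<bar>sqrt h - sqrt h'\<bar>"
proof -
  define s where "s = sqrt (2 * a * (1 - lam) * tf)"
  have "0 < s" using assms by (simp add: s_def)
  then have widths: "0 < s * sqrt h" "0 < s * sqrt h'" using assms by simp_all
  have abs_diff: "\<bar>u_h a tf lam uL uR h x - u_h a tf lam uL uR h' x\<bar>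
      = \<bar>(uR - uL) / 2\<bar> * \<bar>erf_gap (s * sqrt h) (s * sqrt h') (a * tf) x\<bar>" for x
    by (simp add: u_h_diff sqrt_4_nu_h_mult s_def abs_mult)
  show "integrable lborel (\<lambda>x. \<bar>u_h a tf lam uL uR h x - u_h a tf lam uL uR h' x\<bar>)"
    unfolding abs_diff using erf_gap_L1(1)[OF widths] by simp
  have "\<bar>s * sqrt h' - s * sqrt h\<bar> = s * \<bar>sqrt h - sqrt h'\<bar>"
    using \<open>0 < s\<close> by (simp add: abs_mult abs_minus_commute flip: right_diff_distrib)
  then show "L1_dist (u_h a tf lam uL uR h) (u_h a tf lam uL uR h')
      = \<bar>uR - uL\<bar> * sqrt (2 * a * (1 - lam) * tf) / sqrt pi * \<bar>sqrt h - sqrt h'\<bar>"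
    unfolding L1_dist_def abs_diff integral_mult_right_zero erf_gap_L1(2)[OF widths]
    by (simp add: s_def)
qed

theorem mainTheorem2:
  fixes a tf lam uL uR :: real
  assumes "a > 0" and "tf > 0" and "0 < lam" and "lam < 1" and "uL \<noteq> uR"
  shows "(\<exists>C > 0. \<forall>h h'. h > 0 \<longrightarrow> h' > 0 \<longrightarrow>
            integrable lborel (\<lambda>x. \<bar>u_h a tf lam uL uR h x - u_h a tf lam uL uR h' x\<bar>) \<and>
            L1_dist (u_h a tf lam uL uR h) (u_h a tf lam uL uR h') = C * \<bar>sqrt h - sqrt h'\<bar>)
       \<and> (\<forall>hi hj hk. hi > 0 \<longrightarrow> hj > 0 \<longrightarrow> hk > 0 \<longrightarrow> hi \<noteq> hj \<longrightarrow> hj \<noteq> hk \<longrightarrow> hi \<noteq> hk \<longrightarrow>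
            L1_dist (u_h a tf lam uL uR hi) (u_h a tf lam uL uR hj) /
            L1_dist (u_h a tf lam uL uR hj) (u_h a tf lam uL uR hk)
            = \<bar>hi powr (1/2) - hj powr (1/2)\<bar> / \<bar>hj powr (1/2) - hk powr (1/2)\<bar>)"
proof -
  define C where "C = \<bar>uR - uL\<bar> * sqrt (2 * a * (1 - lam) * tf) / sqrt pi"
  have "C > 0" using assms by (simp add: C_def)
  note L1 = L1_dist_u_h[OF assms(1,2,4), of _ _ uL uR, folded C_def]
  show ?thesis
    using \<open>C > 0\<close> L1 by (intro conjI exI[where x = C]) (auto simp: powr_half_sqrt)
qed

end
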